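(* Let $M$ be a principally Goldie*-lifting right $R$-module and $N$ a submodule of $M$. If $(N+D)/N$ is a direct summand of $M/N$ for every cyclic direct summand $D$ of $M$, then $M/N$ is principally Goldie*-lifting.
   Context: $R$ is an associative ring with identity; modules are unital right $R$-modules. $K\ll L$ means $K$ is small in $L$. For submodules $X,Y$ of a module $L$, $X\,\beta^*\,Y$ in $L$ means $(X+Y)/X\ll L/X$ and $(X+Y)/Y\ll L/Y$. A module $L$ is principally Goldie*-lifting if for every cyclic submodule $X$ of $L$ there is a direct summand $D$ of $L$ with $X\,\beta^*\,D$. *)

theory Defs
  imports Main
begin

text \<open>Unital right modules over an associative ring with identity (type class ring_1,
  not necessarily commutative), given as explicit structures so that quotient modules
  can be formed.\<close>

record ('r, 'm) rmod =
  carrier :: "'m set"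
  add :: "'m \<Rightarrow> 'm \<Rightarrow> 'm"
  zero :: "'m"
  smult :: "'m \<Rightarrow> 'r \<Rightarrow> 'm"

definition rmodule :: "('r::ring_1, 'm) rmod \<Rightarrow> bool" where
  "rmodule L \<longleftrightarrow>
     zero L \<in> carrier L \<and>
     (\<forall>x\<in>carrier L. \<forall>y\<in>carrier L. add L x y \<in> carrier L) \<and>
     (\<forall>x\<in>carrier L. \<forall>r. smult L x r \<in> carrier L) \<and>
     (\<forall>x\<in>carrier L. \<forall>y\<in>carrier L. \<forall>z\<in>carrier L. add L (add L x y) z = add L x (add L y z)) \<and>
     (\<forall>x\<in>carrier L. \<forall>y\<in>carrier L. add L x y = add L y x) \<and>
     (\<forall>x\<in>carrier L. add L (zero L) x = x) \<and>
     (\<forall>x\<in>carrier L. \<exists>y\<in>carrier L. add L x y = zero L) \<and>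
     (\<forall>x\<in>carrier L. \<forall>y\<in>carrier L. \<forall>r. smult L (add L x y) r = add L (smult L x r) (smult L y r)) \<and>
     (\<forall>x\<in>carrier L. \<forall>r s. smult L x (r + s) = add L (smult L x r) (smult L x s)) \<and>
     (\<forall>x\<in>carrier L. \<forall>r s. smult L x (r * s) = smult L (smult L x r) s) \<and>
     (\<forall>x\<in>carrier L. smult L x 1 = x)"

definition submodule :: "('r::ring_1, 'm) rmod \<Rightarrow> 'm set \<Rightarrow> bool" where
  "submodule L N \<longleftrightarrow> N \<subseteq> carrier L \<and> zero L \<in> N \<and>
     (\<forall>x\<in>N. \<forall>y\<in>N. add L x y \<in> N) \<and>
     (\<forall>x\<in>N. \<forall>r. smult L x r \<in> N) \<and>
     (\<forall>x\<in>N. \<exists>y\<in>N. add L x y = zero L)"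

definition msum :: "('r, 'm) rmod \<Rightarrow> 'm set \<Rightarrow> 'm set \<Rightarrow> 'm set" where
  "msum L X Y = {add L x y | x y. x \<in> X \<and> y \<in> Y}"

definition cyc :: "('r, 'm) rmod \<Rightarrow> 'm \<Rightarrow> 'm set" where
  "cyc L x = {smult L x r | r. True}"

definition cyclic_sub :: "('r::ring_1, 'm) rmod \<Rightarrow> 'm set \<Rightarrow> bool" where
  "cyclic_sub L X \<longleftrightarrow> (\<exists>x\<in>carrier L. X = cyc L x)"

definition direct_summand :: "('r::ring_1, 'm) rmod \<Rightarrow> 'm set \<Rightarrow> bool" where
  "direct_summand L D \<longleftrightarrow> submodule L D \<and>
     (\<exists>D'. submodule L D' \<and> msum L D D' = carrier L \<and> D \<inter> D' = {zero L})"

definition small :: "('r::ring_1, 'm) rmod \<Rightarrow> 'm set \<Rightarrow> bool" where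
  "small L K \<longleftrightarrow> submodule L K \<and>
     (\<forall>T. submodule L T \<and> msum L K T = carrier L \<longrightarrow> T = carrier L)"

definition coset :: "('r, 'm) rmod \<Rightarrow> 'm set \<Rightarrow> 'm \<Rightarrow> 'm set" where
  "coset L X x = {add L x n | n. n \<in> X}"

definition quot :: "('r, 'm) rmod \<Rightarrow> 'm set \<Rightarrow> ('r, 'm set) rmod" where
  "quot L X = \<lparr> carrier = coset L X ` carrier L,
               add = (\<lambda>A B. {add L a b | a b. a \<in> A \<and> b \<in> B}),
               zero = X,
               smult = (\<lambda>A r. {add L (smult L a r) n | a n. a \<in> A \<and> n \<in> X}) \<rparr>"

definition qimg :: "('r, 'm) rmod \<Rightarrow> 'm set \<Rightarrow> 'm set \<Rightarrow> 'm set set" where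
  "qimg L X S = coset L X ` S"

definition beta_star :: "('r::ring_1, 'm) rmod \<Rightarrow> 'm set \<Rightarrow> 'm set \<Rightarrow> bool" where
  "beta_star L X Y \<longleftrightarrow>
     small (quot L X) (qimg L X (msum L X Y)) \<and> small (quot L Y) (qimg L Y (msum L X Y))"

definition principally_goldie_star_lifting :: "('r::ring_1, 'm) rmod \<Rightarrow> bool" where
  "principally_goldie_star_lifting L \<longleftrightarrow>
     (\<forall>X. submodule L X \<and> cyclic_sub L X \<longrightarrow> (\<exists>D. direct_summand L D \<and> beta_star L X D))"

end

theory Submission
  imports Defs
begin

(* For submodules X \<subseteq> S of L, the smallness of S/X in
   L/X is, by the correspondence theorem, a statement about L itself: every submodule
   T \<supseteq> X with S + T = L equals L (predicate small_over).  Hence K beta* D in L means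
   small_over L K (K + D) and small_over L D (K + D).

   Let X = (xR + N)/N be a cyclic submodule of M/N.  Since M is principally Goldie*-lifting,
   xR beta* D for some direct summand D of M.  Two facts finish the argument:
   (1) D is cyclic: if M = D \<oplus> D', then xR + D' = M, so D is generated by the
       D-component of x; by hypothesis (D + N)/N is therefore a direct summand of M/N;
   (2) beta* passes to quotients: K beta* D in M implies (K+N)/N beta* (D+N)/N in M/N,
       because small_over survives enlarging the submodule factored out and descends
       along M \<rightarrow> M/N (third isomorphism theorem). *)

text \<open>S/X is small in L/X, expressed inside L (for submodules X \<subseteq> S).\<close>
definition small_over :: "('r::ring_1, 'm) rmod \<Rightarrow> 'm set \<Rightarrow> 'm set \<Rightarrow> bool" where
  "small_over L X S \<longleftrightarrow>
     (\<forall>T. submodule L T \<and> X \<subseteq> T \<and> msum L S T = carrier L \<longrightarrow> T = carrier L)"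

locale right_module =
  fixes L :: "('r::ring_1, 'm) rmod"
  assumes rmod: "rmodule L"
begin

abbreviation C where "C \<equiv> carrier L"
abbreviation ad (infixl "\<oplus>" 65) where "ad \<equiv> add L"
abbreviation z where "z \<equiv> zero L"
abbreviation sm (infixl "\<cdot>" 70) where "sm \<equiv> smult L"

lemma zero_closed [simp]: "z \<in> C"
  using rmod unfolding rmodule_def by auto
lemma add_closed [simp]: "x \<in> C \<Longrightarrow> y \<in> C \<Longrightarrow> x \<oplus> y \<in> C"
  using rmod unfolding rmodule_def by auto
lemma smult_closed [simp]: "x \<in> C \<Longrightarrow> x \<cdot> r \<in> C"
  using rmod unfolding rmodule_def by auto
lemma add_assoc: "x \<in> C \<Longrightarrow> y \<in> C \<Longrightarrow> w \<in> C \<Longrightarrow> (x \<oplus> y) \<oplus> w = x \<oplus> (y \<oplus> w)"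
  using rmod unfolding rmodule_def by auto
lemma add_comm: "x \<in> C \<Longrightarrow> y \<in> C \<Longrightarrow> x \<oplus> y = y \<oplus> x"
  using rmod unfolding rmodule_def by auto
lemma add_lcomm: "x \<in> C \<Longrightarrow> y \<in> C \<Longrightarrow> w \<in> C \<Longrightarrow> x \<oplus> (y \<oplus> w) = y \<oplus> (x \<oplus> w)"
  by (metis add_assoc add_comm)
lemma zero_add [simp]: "x \<in> C \<Longrightarrow> z \<oplus> x = x"
  using rmod unfolding rmodule_def by auto
lemma add_zero [simp]: "x \<in> C \<Longrightarrow> x \<oplus> z = x"
  using add_comm zero_add zero_closed by metis
lemma smult_add_left: "x \<in> C \<Longrightarrow> y \<in> C \<Longrightarrow> (x \<oplus> y) \<cdot> r = x \<cdot> r \<oplus> y \<cdot> r"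
  using rmod unfolding rmodule_def by auto
lemma smult_add_right: "x \<in> C \<Longrightarrow> x \<cdot> (r + s) = x \<cdot> r \<oplus> x \<cdot> s"
  using rmod unfolding rmodule_def by auto
lemma smult_mult: "x \<in> C \<Longrightarrow> x \<cdot> (r * s) = (x \<cdot> r) \<cdot> s"
  using rmod unfolding rmodule_def by auto
lemma smult_one [simp]: "x \<in> C \<Longrightarrow> x \<cdot> 1 = x"
  using rmod unfolding rmodule_def by auto

lemmas add_ac = add_assoc add_comm add_lcomm

lemma add_left_cancel:
  assumes "x \<in> C" "y \<in> C" "w \<in> C" "x \<oplus> y = x \<oplus> w" shows "y = w"
proof -
  have "\<exists>u\<in>C. x \<oplus> u = z"
    using rmod assms(1) unfolding rmodule_def by (elim conjE) (rule bspec)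
  then obtain u where u: "u \<in> C" "x \<oplus> u = z" by blast
  have "(u \<oplus> x) \<oplus> y = (u \<oplus> x) \<oplus> w" using assms u by (simp add: add_assoc)
  thus ?thesis using u assms by (simp add: add_comm)
qed

lemma smult_zero [simp]: assumes "x \<in> C" shows "x \<cdot> 0 = z"
proof -
  have "x \<cdot> 0 \<oplus> x \<cdot> 0 = x \<cdot> 0 \<oplus> z" using smult_add_right[OF assms, of 0 0] assms by simp
  thus ?thesis using add_left_cancel assms by (metis smult_closed zero_closed)
qed

definition neg where "neg x = x \<cdot> (-1)"

lemma neg_closed [simp]: "x \<in> C \<Longrightarrow> neg x \<in> C"
  unfolding neg_def by simp
lemma add_neg [simp]: assumes "x \<in> C" shows "x \<oplus> neg x = z"
proof -
  have "x \<oplus> neg x = x \<cdot> (1 + -1)"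
    using assms smult_add_right[OF assms, of 1 "-1"] by (simp add: neg_def)
  thus ?thesis using assms by simp
qed
lemma neg_add [simp]: "x \<in> C \<Longrightarrow> neg x \<oplus> x = z"
  using add_comm add_neg neg_closed by metis
lemma add_neg_cancel [simp]: "x \<in> C \<Longrightarrow> y \<in> C \<Longrightarrow> x \<oplus> (neg x \<oplus> y) = y"
  by (simp flip: add_assoc)
lemma neg_add_cancel [simp]: "x \<in> C \<Longrightarrow> y \<in> C \<Longrightarrow> neg x \<oplus> (x \<oplus> y) = y"
  by (simp flip: add_assoc)

subsection \<open>Submodules and their sums\<close>

lemma sub_carrier: "submodule L X \<Longrightarrow> X \<subseteq> C"
  unfolding submodule_def by blast
lemma sub_zero: "submodule L X \<Longrightarrow> z \<in> X"
  unfolding submodule_def by blast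
lemma sub_add: "submodule L X \<Longrightarrow> x \<in> X \<Longrightarrow> y \<in> X \<Longrightarrow> x \<oplus> y \<in> X"
  unfolding submodule_def by blast
lemma sub_smult: "submodule L X \<Longrightarrow> x \<in> X \<Longrightarrow> x \<cdot> r \<in> X"
  unfolding submodule_def by blast
lemma sub_neg: "submodule L X \<Longrightarrow> x \<in> X \<Longrightarrow> neg x \<in> X"
  unfolding neg_def by (rule sub_smult)

text \<open>Closure under inverses is automatic: they are multiples by -1.\<close>
lemma submoduleI:
  assumes "X \<subseteq> C" "z \<in> X" "\<And>x y. x \<in> X \<Longrightarrow> y \<in> X \<Longrightarrow> x \<oplus> y \<in> X"
    "\<And>x r. x \<in> X \<Longrightarrow> x \<cdot> r \<in> X"
  shows "submodule L X"
  unfolding submodule_def using assms add_neg unfolding neg_def by (metis subsetD)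

lemma submodule_carrier: "submodule L C"
  by (rule submoduleI) auto

lemma msum_submodule:
  assumes S: "submodule L S" and T: "submodule L T"
  shows "submodule L (msum L S T)"
proof (rule submoduleI)
  show "msum L S T \<subseteq> C"
    unfolding msum_def using sub_carrier[OF S] sub_carrier[OF T] add_closed by blast
  have "z = z \<oplus> z" by simp
  thus "z \<in> msum L S T" unfolding msum_def using sub_zero[OF S] sub_zero[OF T] by blast
next
  fix x y assume "x \<in> msum L S T" "y \<in> msum L S T"
  then obtain a b c d where abcd: "a \<in> S" "b \<in> T" "c \<in> S" "d \<in> T" "x = a \<oplus> b" "y = c \<oplus> d"
    unfolding msum_def by auto
  moreover have "a \<in> C" "b \<in> C" "c \<in> C" "d \<in> C"
    using abcd sub_carrier[OF S] sub_carrier[OF T] by auto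
  ultimately have "x \<oplus> y = (a \<oplus> c) \<oplus> (b \<oplus> d)" by (simp add: add_ac)
  thus "x \<oplus> y \<in> msum L S T" unfolding msum_def using abcd sub_add[OF S] sub_add[OF T] by blast
next
  fix x r assume "x \<in> msum L S T"
  then obtain a b where ab: "a \<in> S" "b \<in> T" "x = a \<oplus> b" unfolding msum_def by auto
  moreover have "a \<in> C" "b \<in> C" using ab sub_carrier[OF S] sub_carrier[OF T] by auto
  ultimately have "x \<cdot> r = a \<cdot> r \<oplus> b \<cdot> r" using smult_add_left by auto
  thus "x \<cdot> r \<in> msum L S T" unfolding msum_def using ab sub_smult[OF S] sub_smult[OF T] by blast
qed

lemma msum_upper1: assumes "submodule L T" "S \<subseteq> C" shows "S \<subseteq> msum L S T"
proof
  fix x assume "x \<in> S"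
  hence "x = x \<oplus> z" "x \<in> S" "z \<in> T" using assms sub_zero by auto
  thus "x \<in> msum L S T" unfolding msum_def by blast
qed

lemma msum_upper2: assumes "submodule L S" "T \<subseteq> C" shows "T \<subseteq> msum L S T"
proof
  fix x assume "x \<in> T"
  hence "x = z \<oplus> x" "x \<in> T" "z \<in> S" using assms sub_zero by auto
  thus "x \<in> msum L S T" unfolding msum_def by blast
qed

lemma msum_mono: "S \<subseteq> S' \<Longrightarrow> T \<subseteq> T' \<Longrightarrow> msum L S T \<subseteq> msum L S' T'"
  unfolding msum_def by blast

lemma msum_assoc_subset:
  assumes "S \<subseteq> C" "T \<subseteq> C" "U \<subseteq> C"
  shows "msum L (msum L S T) U \<subseteq> msum L S (msum L T U)"
proof
  fix w assume "w \<in> msum L (msum L S T) U"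
  then obtain s t u where e: "s \<in> S" "t \<in> T" "u \<in> U" "w = (s \<oplus> t) \<oplus> u"
    unfolding msum_def by blast
  hence "w = s \<oplus> (t \<oplus> u)" using assms add_assoc by blast
  thus "w \<in> msum L S (msum L T U)" using e unfolding msum_def by blast
qed

lemma msum_least:
  assumes "submodule L V" "S \<subseteq> V" "T \<subseteq> V" shows "msum L S T \<subseteq> V"
  using assms sub_add unfolding msum_def by blast

text \<open>Regrouping used to move beta* from K, D to K + N, D + N:
  (N + K) + (N + D) \<subseteq> (K + D) + (N + Y) for every submodule Y.\<close>
lemma msum_regroup:
  assumes N: "submodule L N" and K: "submodule L K" and D: "submodule L D"
    and Y: "submodule L Y"
  shows "msum L (msum L N K) (msum L N D) \<subseteq> msum L (msum L K D) (msum L N Y)"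
proof
  fix w assume "w \<in> msum L (msum L N K) (msum L N D)"
  then obtain n1 k n2 d where e: "n1 \<in> N" "k \<in> K" "n2 \<in> N" "d \<in> D"
    "w = (n1 \<oplus> k) \<oplus> (n2 \<oplus> d)" unfolding msum_def by blast
  have c: "n1 \<in> C" "k \<in> C" "n2 \<in> C" "d \<in> C"
    using e sub_carrier[OF N] sub_carrier[OF K] sub_carrier[OF D] by auto
  have "w = (k \<oplus> d) \<oplus> ((n1 \<oplus> n2) \<oplus> z)" using e(5) c by (simp add: add_ac)
  moreover have "k \<oplus> d \<in> msum L K D" using e unfolding msum_def by auto
  moreover have "(n1 \<oplus> n2) \<oplus> z \<in> msum L N Y"
    using e sub_add[OF N] sub_zero[OF Y] unfolding msum_def by blast
  ultimately show "w \<in> msum L (msum L K D) (msum L N Y)" unfolding msum_def by auto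
qed

lemma cyc_submodule: assumes x: "x \<in> C" shows "submodule L (cyc L x)"
proof (rule submoduleI)
  show "cyc L x \<subseteq> C" unfolding cyc_def using x by auto
  have "z = x \<cdot> 0" using x by simp
  thus "z \<in> cyc L x" unfolding cyc_def by blast
next
  fix a b assume "a \<in> cyc L x" "b \<in> cyc L x"
  then obtain r s where "a = x \<cdot> r" "b = x \<cdot> s" unfolding cyc_def by auto
  hence "a \<oplus> b = x \<cdot> (r + s)" using smult_add_right x by simp
  thus "a \<oplus> b \<in> cyc L x" unfolding cyc_def by auto
next
  fix a r assume "a \<in> cyc L x"
  then obtain s where "a = x \<cdot> s" unfolding cyc_def by auto
  hence "a \<cdot> r = x \<cdot> (s * r)" using smult_mult x by simp
  thus "a \<cdot> r \<in> cyc L x" unfolding cyc_def by auto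
qed

subsection \<open>Cosets and the quotient module\<close>

abbreviation Q where "Q X \<equiv> quot L X"
abbreviation cs where "cs X \<equiv> coset L X"

lemma coset_subset: "submodule L X \<Longrightarrow> x \<in> C \<Longrightarrow> cs X x \<subseteq> C"
  unfolding coset_def using sub_carrier[of X] by auto

lemma in_coset: "submodule L X \<Longrightarrow> x \<in> C \<Longrightarrow> x \<in> cs X x"
  unfolding coset_def using sub_zero add_zero by force

lemma coset_eq:
  assumes X: "submodule L X" and x: "x \<in> C" and y: "y \<in> cs X x"
  shows "cs X y = cs X x"
proof -
  obtain n where n: "n \<in> X" "y = x \<oplus> n" using y unfolding coset_def by auto
  have nC: "n \<in> C" using n X sub_carrier by auto
  show ?thesis
  proof
    show "cs X y \<subseteq> cs X x"
    proof
      fix w assume "w \<in> cs X y"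
      then obtain m where m: "m \<in> X" "w = y \<oplus> m" unfolding coset_def by auto
      have "m \<in> C" using m X sub_carrier by auto
      hence "w = x \<oplus> (n \<oplus> m)" using m n nC x by (simp add: add_assoc)
      thus "w \<in> cs X x" using sub_add[OF X n(1) m(1)] unfolding coset_def by auto
    qed
  next
    show "cs X x \<subseteq> cs X y"
    proof
      fix w assume "w \<in> cs X x"
      then obtain m where m: "m \<in> X" "w = x \<oplus> m" unfolding coset_def by auto
      have "m \<in> C" using m X sub_carrier by auto
      hence "w = y \<oplus> (neg n \<oplus> m)" using m n nC x by (simp add: add_assoc)
      thus "w \<in> cs X y" using sub_add[OF X sub_neg[OF X n(1)] m(1)] unfolding coset_def by auto
    qed
  qed
qed

lemma coset_zero: "submodule L X \<Longrightarrow> cs X z = X"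
  unfolding coset_def using sub_carrier by force

lemma coset_add_left: assumes X: "submodule L X" and x: "x \<in> C" and n: "n \<in> X"
  shows "cs X (n \<oplus> x) = cs X x"
proof -
  have "n \<in> C" using n sub_carrier[OF X] by blast
  hence "n \<oplus> x = x \<oplus> n" using x add_comm by blast
  hence "n \<oplus> x \<in> cs X x" using n unfolding coset_def by blast
  thus ?thesis using coset_eq[OF X x] by blast
qed

lemma coset_representative:
  assumes X: "submodule L X" and A: "A \<in> cs X ` C" and a: "a \<in> A"
  shows "a \<in> C \<and> A = cs X a"
proof -
  obtain b where b: "b \<in> C" "A = cs X b" using A by auto
  thus ?thesis using coset_eq[OF X b(1)] a coset_subset[OF X b(1)] by auto
qed

lemma quot_add: assumes X: "submodule L X" and x: "x \<in> C" and y: "y \<in> C"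
  shows "add (Q X) (cs X x) (cs X y) = cs X (x \<oplus> y)"
proof -
  have "{a \<oplus> b |a b. a \<in> cs X x \<and> b \<in> cs X y} = cs X (x \<oplus> y)"
  proof
    show "{a \<oplus> b |a b. a \<in> cs X x \<and> b \<in> cs X y} \<subseteq> cs X (x \<oplus> y)"
    proof clarify
      fix a b assume a: "a \<in> cs X x" and b: "b \<in> cs X y"
      obtain n where n: "n \<in> X" "a = x \<oplus> n" using a unfolding coset_def by auto
      obtain m where m: "m \<in> X" "b = y \<oplus> m" using b unfolding coset_def by auto
      have "n \<in> C" "m \<in> C" using n m X sub_carrier by auto
      hence "a \<oplus> b = (x \<oplus> y) \<oplus> (n \<oplus> m)" using n m x y by (simp add: add_ac)
      thus "a \<oplus> b \<in> cs X (x \<oplus> y)" using sub_add[OF X n(1) m(1)] unfolding coset_def by auto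
    qed
  next
    show "cs X (x \<oplus> y) \<subseteq> {a \<oplus> b |a b. a \<in> cs X x \<and> b \<in> cs X y}"
    proof
      fix w assume "w \<in> cs X (x \<oplus> y)"
      then obtain n where n: "n \<in> X" "w = (x \<oplus> y) \<oplus> n" unfolding coset_def by auto
      have "n \<in> C" using n X sub_carrier by auto
      hence "w = x \<oplus> (y \<oplus> n)" using n x y by (simp add: add_assoc)
      moreover have "x \<in> cs X x" using in_coset X x by auto
      moreover have "y \<oplus> n \<in> cs X y" using n unfolding coset_def by auto
      ultimately show "w \<in> {a \<oplus> b |a b. a \<in> cs X x \<and> b \<in> cs X y}" by auto
    qed
  qed
  thus ?thesis unfolding quot_def by simp
qed

lemma quot_smult: assumes X: "submodule L X" and x: "x \<in> C"
  shows "smult (Q X) (cs X x) r = cs X (x \<cdot> r)"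
proof -
  have "{a \<cdot> r \<oplus> n |a n. a \<in> cs X x \<and> n \<in> X} = cs X (x \<cdot> r)"
  proof
    show "{a \<cdot> r \<oplus> n |a n. a \<in> cs X x \<and> n \<in> X} \<subseteq> cs X (x \<cdot> r)"
    proof clarify
      fix a n assume a: "a \<in> cs X x" and n: "n \<in> X"
      obtain m where m: "m \<in> X" "a = x \<oplus> m" using a unfolding coset_def by auto
      have "n \<in> C" "m \<in> C" using n m X sub_carrier by auto
      hence "a \<cdot> r \<oplus> n = x \<cdot> r \<oplus> (m \<cdot> r \<oplus> n)" using m x by (simp add: smult_add_left add_assoc)
      moreover have "m \<cdot> r \<oplus> n \<in> X" using n m X sub_add sub_smult by auto
      ultimately show "a \<cdot> r \<oplus> n \<in> cs X (x \<cdot> r)" unfolding coset_def by auto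
    qed
  next
    show "cs X (x \<cdot> r) \<subseteq> {a \<cdot> r \<oplus> n |a n. a \<in> cs X x \<and> n \<in> X}"
      using in_coset[OF X x] unfolding coset_def by auto
  qed
  thus ?thesis unfolding quot_def by simp
qed

lemma quot_carrier: "carrier (Q X) = qimg L X C"
  unfolding quot_def qimg_def by simp

lemma quot_zero: "zero (Q X) = X"
  unfolding quot_def by simp

lemma rmodule_quot: assumes X: "submodule L X" shows "rmodule (Q X)"
proof -
  note qa = quot_add[OF X] and qs = quot_smult[OF X]
  have Z: "X = cs X z" using coset_zero[OF X] by simp
  show ?thesis
    unfolding rmodule_def quot_carrier quot_zero qimg_def
  proof (intro conjI ballI allI)
    show "X \<in> cs X ` C" using Z by auto
  next
    fix A B assume "A \<in> cs X ` C" "B \<in> cs X ` C"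
    thus "add (Q X) A B \<in> cs X ` C" by (auto simp: qa)
  next
    fix A r assume "A \<in> cs X ` C"
    thus "smult (Q X) A r \<in> cs X ` C" by (auto simp: qs)
  next
    fix A B D assume "A \<in> cs X ` C" "B \<in> cs X ` C" "D \<in> cs X ` C"
    thus "add (Q X) (add (Q X) A B) D = add (Q X) A (add (Q X) B D)" by (auto simp: qa add_assoc)
  next
    fix A B assume "A \<in> cs X ` C" "B \<in> cs X ` C"
    thus "add (Q X) A B = add (Q X) B A" by (auto simp: qa add_comm)
  next
    fix A assume "A \<in> cs X ` C"
    then obtain a where a: "a \<in> C" "A = cs X a" by auto
    show "add (Q X) X A = A" using a Z qa by (metis zero_closed zero_add)
    show "\<exists>B\<in>cs X ` C. add (Q X) A B = X"
      using a Z qa by (intro bexI[of _ "cs X (neg a)"]) auto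
  next
    fix A B r assume "A \<in> cs X ` C" "B \<in> cs X ` C"
    thus "smult (Q X) (add (Q X) A B) r = add (Q X) (smult (Q X) A r) (smult (Q X) B r)"
      by (auto simp: qa qs smult_add_left)
  next
    fix A r s assume "A \<in> cs X ` C"
    thus "smult (Q X) A (r + s) = add (Q X) (smult (Q X) A r) (smult (Q X) A s)"
      by (auto simp: qa qs smult_add_right)
  next
    fix A r s assume "A \<in> cs X ` C"
    thus "smult (Q X) A (r * s) = smult (Q X) (smult (Q X) A r) s"
      by (auto simp: qs smult_mult)
  next
    fix A assume "A \<in> cs X ` C"
    thus "smult (Q X) A 1 = A" by (auto simp: qs)
  qed
qed

subsection \<open>Images in the quotient and the correspondence theorem\<close>

lemma qimg_msum: assumes X: "submodule L X" and S: "S \<subseteq> C" and T: "T \<subseteq> C"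
  shows "msum (Q X) (qimg L X S) (qimg L X T) = qimg L X (msum L S T)"
proof
  show "msum (Q X) (qimg L X S) (qimg L X T) \<subseteq> qimg L X (msum L S T)"
  proof
    fix W assume "W \<in> msum (Q X) (qimg L X S) (qimg L X T)"
    then obtain a b where ab: "a \<in> S" "b \<in> T" "W = add (Q X) (cs X a) (cs X b)"
      unfolding msum_def qimg_def by auto
    hence "W = cs X (a \<oplus> b)" using quot_add[OF X] S T by auto
    moreover have "a \<oplus> b \<in> msum L S T" using ab unfolding msum_def by auto
    ultimately show "W \<in> qimg L X (msum L S T)" unfolding qimg_def by auto
  qed
next
  show "qimg L X (msum L S T) \<subseteq> msum (Q X) (qimg L X S) (qimg L X T)"
  proof
    fix W assume "W \<in> qimg L X (msum L S T)"
    then obtain a b where ab: "a \<in> S" "b \<in> T" "W = cs X (a \<oplus> b)"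
      unfolding msum_def qimg_def by auto
    hence "W = add (Q X) (cs X a) (cs X b)" using quot_add[OF X] S T by auto
    moreover have "cs X a \<in> qimg L X S" "cs X b \<in> qimg L X T" using ab unfolding qimg_def by auto
    ultimately show "W \<in> msum (Q X) (qimg L X S) (qimg L X T)" unfolding msum_def by auto
  qed
qed

lemma qimg_absorb: assumes X: "submodule L X" and S: "S \<subseteq> C"
  shows "qimg L X (msum L X S) = qimg L X S"
proof
  show "qimg L X (msum L X S) \<subseteq> qimg L X S"
  proof
    fix W assume "W \<in> qimg L X (msum L X S)"
    then obtain n s where "n \<in> X" "s \<in> S" "W = cs X (n \<oplus> s)"
      unfolding qimg_def msum_def by auto
    thus "W \<in> qimg L X S" using coset_add_left[OF X] S unfolding qimg_def by auto
  qed
next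
  show "qimg L X S \<subseteq> qimg L X (msum L X S)"
    using msum_upper2[OF X S] unfolding qimg_def by (rule image_mono)
qed

lemma qimg_cyc: assumes X: "submodule L X" and x: "x \<in> C"
  shows "cyc (Q X) (cs X x) = qimg L X (cyc L x)"
  unfolding cyc_def qimg_def using quot_smult[OF X x] by auto

lemma union_qimg: assumes X: "submodule L X" and T: "submodule L T" and XT: "X \<subseteq> T"
  shows "\<Union> (qimg L X T) = T"
proof
  show "\<Union> (qimg L X T) \<subseteq> T"
  proof
    fix w assume "w \<in> \<Union> (qimg L X T)"
    then obtain t where t: "t \<in> T" "w \<in> cs X t" unfolding qimg_def by auto
    then obtain n where "n \<in> X" "w = t \<oplus> n" unfolding coset_def by auto
    thus "w \<in> T" using t XT sub_add[OF T] by auto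
  qed
next
  show "T \<subseteq> \<Union> (qimg L X T)"
    using in_coset[OF X] sub_carrier[OF T] unfolding qimg_def by blast
qed

lemma qimg_inj:
  assumes X: "submodule L X" and S: "submodule L S" "X \<subseteq> S"
    and T: "submodule L T" "X \<subseteq> T" and eq: "qimg L X S = qimg L X T"
  shows "S = T"
proof -
  have "S = \<Union> (qimg L X S)" using union_qimg[OF X S] by simp
  also have "\<dots> = T" using union_qimg[OF X T] eq by simp
  finally show ?thesis .
qed

lemma qimg_submodule: assumes X: "submodule L X" and T: "submodule L T" and XT: "X \<subseteq> T"
  shows "submodule (Q X) (qimg L X T)"
proof -
  have TC: "T \<subseteq> C" using sub_carrier[OF T] .
  show ?thesis unfolding submodule_def quot_carrier quot_zero qimg_def
  proof (intro conjI ballI allI)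
    show "cs X ` T \<subseteq> cs X ` C" using TC by auto
    show "X \<in> cs X ` T" using coset_zero[OF X] sub_zero[OF T] by (metis image_eqI)
  next
    fix A B assume "A \<in> cs X ` T" "B \<in> cs X ` T"
    then obtain a b where ab: "a \<in> T" "b \<in> T" "A = cs X a" "B = cs X b" by auto
    hence "add (Q X) A B = cs X (a \<oplus> b)" using quot_add[OF X] TC by auto
    thus "add (Q X) A B \<in> cs X ` T" using sub_add[OF T ab(1,2)] by auto
  next
    fix A r assume "A \<in> cs X ` T"
    then obtain a where a: "a \<in> T" "A = cs X a" by auto
    hence "smult (Q X) A r = cs X (a \<cdot> r)" using quot_smult[OF X] TC by auto
    thus "smult (Q X) A r \<in> cs X ` T" using sub_smult[OF T a(1)] by auto
  next
    fix A assume "A \<in> cs X ` T"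
    then obtain a where a: "a \<in> T" "A = cs X a" by auto
    hence "add (Q X) A (cs X (neg a)) = X" using quot_add[OF X] coset_zero[OF X] TC by auto
    thus "\<exists>B\<in>cs X ` T. add (Q X) A B = X" using a sub_neg[OF T] by auto
  qed
qed

lemma quot_submodule_corr:
  assumes X: "submodule L X" and S: "submodule (Q X) \<T>"
  shows "submodule L (\<Union>\<T>) \<and> X \<subseteq> \<Union>\<T> \<and> \<T> = qimg L X (\<Union>\<T>)"
proof -
  have S1: "\<T> \<subseteq> cs X ` C" and S2: "X \<in> \<T>"
    and S3: "\<And>A B. A \<in> \<T> \<Longrightarrow> B \<in> \<T> \<Longrightarrow> add (Q X) A B \<in> \<T>"
    and S4: "\<And>A r. A \<in> \<T> \<Longrightarrow> smult (Q X) A r \<in> \<T>"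
    using S unfolding submodule_def quot_carrier quot_zero qimg_def by auto
  have rep: "\<And>A a. A \<in> \<T> \<Longrightarrow> a \<in> A \<Longrightarrow> a \<in> C \<and> A = cs X a"
    using coset_representative[OF X] S1 by blast
  have sub: "submodule L (\<Union>\<T>)"
  proof (rule submoduleI)
    show "\<Union>\<T> \<subseteq> C" using rep by blast
    show "z \<in> \<Union>\<T>" using S2 sub_zero[OF X] by auto
  next
    fix a b assume "a \<in> \<Union>\<T>" "b \<in> \<Union>\<T>"
    then obtain A B where AB: "A \<in> \<T>" "B \<in> \<T>" "a \<in> A" "b \<in> B" by auto
    hence "add (Q X) A B = cs X (a \<oplus> b)" using rep quot_add[OF X] by metis
    moreover have "a \<oplus> b \<in> cs X (a \<oplus> b)" using in_coset[OF X] rep AB by simp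
    ultimately show "a \<oplus> b \<in> \<Union>\<T>" using S3[OF AB(1,2)] by auto
  next
    fix a r assume "a \<in> \<Union>\<T>"
    then obtain A where AB: "A \<in> \<T>" "a \<in> A" by auto
    hence "smult (Q X) A r = cs X (a \<cdot> r)" using rep quot_smult[OF X] by metis
    moreover have "a \<cdot> r \<in> cs X (a \<cdot> r)" using in_coset[OF X] rep AB by simp
    ultimately show "a \<cdot> r \<in> \<Union>\<T>" using S4[OF AB(1)] by auto
  qed
  have "\<T> = qimg L X (\<Union>\<T>)"
  proof
    show "\<T> \<subseteq> qimg L X (\<Union>\<T>)"
    proof
      fix A assume A: "A \<in> \<T>"
      then obtain a where "a \<in> C" "A = cs X a" using S1 by auto
      hence "a \<in> A" "A = cs X a" using in_coset[OF X] by auto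
      thus "A \<in> qimg L X (\<Union>\<T>)" using A unfolding qimg_def by auto
    qed
  next
    show "qimg L X (\<Union>\<T>) \<subseteq> \<T>" unfolding qimg_def using rep by auto
  qed
  thus ?thesis using sub S2 by blast
qed

subsection \<open>Smallness in quotients\<close>

lemma small_quot_iff:
  assumes X: "submodule L X" and S: "submodule L S" and XS: "X \<subseteq> S"
  shows "small (Q X) (qimg L X S) \<longleftrightarrow> small_over L X S"
proof
  assume sm: "small (Q X) (qimg L X S)"
  show "small_over L X S" unfolding small_over_def
  proof clarify
    fix T assume T: "submodule L T" "X \<subseteq> T" "msum L S T = C"
    have "msum (Q X) (qimg L X S) (qimg L X T) = carrier (Q X)"
      using qimg_msum[OF X sub_carrier[OF S] sub_carrier[OF T(1)]] T(3) quot_carrier by simp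
    hence "qimg L X T = qimg L X C"
      using sm qimg_submodule[OF X T(1,2)] quot_carrier unfolding small_def by blast
    thus "T = C" using qimg_inj[OF X T(1,2) submodule_carrier sub_carrier[OF X]] by simp
  qed
next
  assume H: "small_over L X S"
  show "small (Q X) (qimg L X S)" unfolding small_def
  proof (intro conjI allI impI)
    show "submodule (Q X) (qimg L X S)" using qimg_submodule[OF X S XS] .
  next
    fix \<T> assume A: "submodule (Q X) \<T> \<and> msum (Q X) (qimg L X S) \<T> = carrier (Q X)"
    let ?T = "\<Union>\<T>"
    have T: "submodule L ?T" "X \<subseteq> ?T" "\<T> = qimg L X ?T"
      using quot_submodule_corr[OF X] A by auto
    have "qimg L X (msum L S ?T) = qimg L X C"
      using A qimg_msum[OF X sub_carrier[OF S] sub_carrier[OF T(1)]] T(3) quot_carrier by simp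
    moreover have "X \<subseteq> msum L S ?T" using T(2) msum_upper2[OF S sub_carrier[OF T(1)]] by blast
    ultimately have "msum L S ?T = C"
      using qimg_inj[OF X msum_submodule[OF S T(1)] _ submodule_carrier sub_carrier[OF X]] by blast
    hence "?T = C" using H T unfolding small_over_def by blast
    thus "\<T> = carrier (Q X)" using T(3) quot_carrier by simp
  qed
qed

lemma small_over_enlarge:
  assumes H: "small_over L X S" and S: "submodule L S" and X': "submodule L X'"
    and XX': "X \<subseteq> X'" and S': "S' \<subseteq> msum L S X'"
  shows "small_over L X' S'"
  unfolding small_over_def
proof clarify
  fix T assume T: "submodule L T" "X' \<subseteq> T" "msum L S' T = C"
  have "C \<subseteq> msum L (msum L S X') T" using T(3) S' msum_mono by blast
  also have "\<dots> \<subseteq> msum L S T"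
  proof -
    have "msum L X' T \<subseteq> T" using msum_least[OF T(1) T(2)] by blast
    moreover have "msum L (msum L S X') T \<subseteq> msum L S (msum L X' T)"
      using msum_assoc_subset sub_carrier[OF S] sub_carrier[OF X'] sub_carrier[OF T(1)] .
    ultimately show ?thesis using msum_mono by blast
  qed
  finally have "msum L S T = C"
    using sub_carrier[OF msum_submodule[OF S T(1)]] by blast
  thus "T = C" using H T XX' unfolding small_over_def by blast
qed

text \<open>small_over descends to the quotient L/N (third isomorphism theorem).\<close>
lemma small_over_quot:
  assumes N: "submodule L N" and X: "submodule L X" "N \<subseteq> X" and S: "submodule L S"
    and H: "small_over L X S"
  shows "small_over (Q N) (qimg L N X) (qimg L N S)"
  unfolding small_over_def
proof clarify
  fix \<T> assume A: "submodule (Q N) \<T>" "qimg L N X \<subseteq> \<T>"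
    "msum (Q N) (qimg L N S) \<T> = carrier (Q N)"
  let ?T = "\<Union>\<T>"
  have T: "submodule L ?T" "N \<subseteq> ?T" "\<T> = qimg L N ?T"
    using quot_submodule_corr[OF N A(1)] by auto
  have "X \<subseteq> ?T" using union_qimg[OF N X] A(2) by blast
  have "qimg L N (msum L S ?T) = qimg L N C"
    using A(3) T(3) quot_carrier qimg_msum[OF N sub_carrier[OF S] sub_carrier[OF T(1)]] by simp
  moreover have "N \<subseteq> msum L S ?T" using T(2) msum_upper2[OF S sub_carrier[OF T(1)]] by blast
  ultimately have "msum L S ?T = C"
    using qimg_inj[OF N msum_submodule[OF S T(1)] _ submodule_carrier sub_carrier[OF N]] by blast
  hence "?T = C" using H T \<open>X \<subseteq> ?T\<close> unfolding small_over_def by blast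
  thus "\<T> = carrier (Q N)" using T(3) quot_carrier by simp
qed

subsection \<open>The relation beta*\<close>

lemma beta_star_iff:
  assumes X: "submodule L X" and Y: "submodule L Y"
  shows "beta_star L X Y \<longleftrightarrow>
           small_over L X (msum L X Y) \<and> small_over L Y (msum L X Y)"
  unfolding beta_star_def
  using small_quot_iff[OF X msum_submodule[OF X Y] msum_upper1[OF Y sub_carrier[OF X]]]
    small_quot_iff[OF Y msum_submodule[OF X Y] msum_upper2[OF X sub_carrier[OF Y]]]
  by simp

lemma beta_star_quot:
  assumes N: "submodule L N" and K: "submodule L K" and D: "submodule L D"
    and KD: "beta_star L K D"
  shows "beta_star (Q N) (qimg L N K) (qimg L N D)"
proof -
  interpret LN: right_module "Q N" by (rule right_module.intro[OF rmodule_quot[OF N]])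
  define K1 D1 where "K1 = msum L N K" and "D1 = msum L N D"
  define S where "S = msum L K1 D1"
  have K1: "submodule L K1" "N \<subseteq> K1" "K \<subseteq> K1" unfolding K1_def
    using msum_submodule[OF N K] msum_upper1[OF K sub_carrier[OF N]]
      msum_upper2[OF N sub_carrier[OF K]] by auto
  have D1: "submodule L D1" "N \<subseteq> D1" "D \<subseteq> D1" unfolding D1_def
    using msum_submodule[OF N D] msum_upper1[OF D sub_carrier[OF N]]
      msum_upper2[OF N sub_carrier[OF D]] by auto
  have S: "submodule L S" unfolding S_def using msum_submodule[OF K1(1) D1(1)] .
  have KD_small: "small_over L K (msum L K D)" "small_over L D (msum L K D)"
    using KD beta_star_iff[OF K D] by auto
  have "small_over L K1 S"
    using small_over_enlarge[OF KD_small(1) msum_submodule[OF K D] K1(1,3)]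
      msum_regroup[OF N K D K] unfolding S_def K1_def D1_def by blast
  hence sK: "small_over (Q N) (qimg L N K1) (qimg L N S)"
    using small_over_quot[OF N K1(1,2) S] by blast
  have "small_over L D1 S"
    using small_over_enlarge[OF KD_small(2) msum_submodule[OF K D] D1(1,3)]
      msum_regroup[OF N K D D] unfolding S_def K1_def D1_def by blast
  hence sD: "small_over (Q N) (qimg L N D1) (qimg L N S)"
    using small_over_quot[OF N D1(1,2) S] by blast
  have imgs: "qimg L N K = qimg L N K1" "qimg L N D = qimg L N D1"
    "msum (Q N) (qimg L N K1) (qimg L N D1) = qimg L N S"
    unfolding K1_def D1_def S_def
    using qimg_absorb[OF N sub_carrier[OF K]] qimg_absorb[OF N sub_carrier[OF D]]
      qimg_msum[OF N sub_carrier[OF K1(1)] sub_carrier[OF D1(1)]]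
    unfolding K1_def D1_def by simp_all
  show ?thesis
    unfolding imgs(1,2) LN.beta_star_iff[OF qimg_submodule[OF N K1(1,2)] qimg_submodule[OF N D1(1,2)]]
    using sK sD imgs(3) by simp
qed

subsection \<open>Direct summands beta*-related to a cyclic submodule\<close>

lemma beta_summand_supplement:
  assumes K: "submodule L K" and D: "submodule L D" and D': "submodule L D'"
    and sum: "msum L D D' = C" and H: "small_over L K (msum L K D)"
  shows "msum L K D' = C"
proof -
  have KD': "submodule L (msum L K D')" using msum_submodule[OF K D'] .
  have "C \<subseteq> msum L (msum L K D) (msum L K D')"
    using sum msum_mono[OF msum_upper2[OF K sub_carrier[OF D]] msum_upper2[OF K sub_carrier[OF D']]]
    by simp
  hence "msum L (msum L K D) (msum L K D') = C"
    using sub_carrier[OF msum_submodule[OF msum_submodule[OF K D] KD']] by blast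
  thus ?thesis using H KD' msum_upper1[OF D' sub_carrier[OF K]] unfolding small_over_def by blast
qed

text \<open>If L = D \<oplus> D' and xR + D' = L, then D is generated by the D-component of x.\<close>
lemma summand_cyclic:
  assumes x: "x \<in> C" and D: "submodule L D" and D': "submodule L D'"
    and sum: "msum L D D' = C" and int: "D \<inter> D' = {z}" and supp: "msum L (cyc L x) D' = C"
  shows "cyclic_sub L D"
proof -
  obtain d d' where dd: "d \<in> D" "d' \<in> D'" "x = d \<oplus> d'"
    using x sum unfolding msum_def by blast
  have dC: "d \<in> C" "d' \<in> C" using dd sub_carrier[OF D] sub_carrier[OF D'] by auto
  have "D \<subseteq> cyc L d"
  proof
    fix e assume e: "e \<in> D"
    then obtain r w where rw: "w \<in> D'" "e = x \<cdot> r \<oplus> w"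
      using supp sub_carrier[OF D] unfolding msum_def cyc_def by blast
    have wC: "w \<in> C" using rw sub_carrier[OF D'] by auto
    let ?v = "d' \<cdot> r \<oplus> w"
    have ev: "e = d \<cdot> r \<oplus> ?v" using rw dd(3) dC wC by (simp add: smult_add_left add_assoc)
    have "?v = neg (d \<cdot> r) \<oplus> e" using ev dC wC by simp
    hence "?v \<in> D" using sub_add[OF D sub_neg[OF D sub_smult[OF D dd(1)]] e] by simp
    moreover have "?v \<in> D'" using sub_add[OF D' sub_smult[OF D' dd(2)] rw(1)] .
    ultimately have "?v = z" using int by auto
    hence "e = d \<cdot> r" using ev dC by simp
    thus "e \<in> cyc L d" unfolding cyc_def by auto
  qed
  moreover have "cyc L d \<subseteq> D" unfolding cyc_def using sub_smult[OF D dd(1)] by auto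
  ultimately show ?thesis unfolding cyclic_sub_def using dC by blast
qed

lemma beta_summand_cyclic:
  assumes K: "cyclic_sub L K" and D: "direct_summand L D" and KD: "beta_star L K D"
  shows "cyclic_sub L D"
proof -
  obtain x where x: "x \<in> C" "K = cyc L x" using K unfolding cyclic_sub_def by blast
  obtain D' where D': "submodule L D" "submodule L D'" "msum L D D' = C" "D \<inter> D' = {z}"
    using D unfolding direct_summand_def by blast
  have "small_over L K (msum L K D)"
    using KD beta_star_iff[OF cyc_submodule[OF x(1)] D'(1)] x(2) by simp
  hence "msum L K D' = C"
    using beta_summand_supplement[OF _ D'(1,2,3)] cyc_submodule[OF x(1)] x(2) by blast
  thus ?thesis using summand_cyclic[OF x(1) D'] x(2) by simp
qed

end

theorem proposition3p10:
  fixes M :: "('r::ring_1, 'm) rmod" and N :: "'m set"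
  assumes "rmodule M"
    and "principally_goldie_star_lifting M"
    and "submodule M N"
    and "\<forall>D. direct_summand M D \<and> cyclic_sub M D \<longrightarrow>
            direct_summand (quot M N) (qimg M N (msum M N D))"
  shows "principally_goldie_star_lifting (quot M N)"
  unfolding principally_goldie_star_lifting_def
proof clarify
  interpret M: right_module M by (rule right_module.intro[OF assms(1)])
  note N = assms(3)
  fix X assume "submodule (quot M N) X" "cyclic_sub (quot M N) X"
  then obtain x where x0: "x \<in> carrier M" "X = cyc (quot M N) (coset M N x)"
    unfolding cyclic_sub_def M.quot_carrier qimg_def by blast
  hence x: "x \<in> carrier M" "X = qimg M N (cyc M x)" using M.qimg_cyc[OF N] by auto
  have K: "submodule M (cyc M x)" "cyclic_sub M (cyc M x)"
    using M.cyc_submodule[OF x(1)] x(1) unfolding cyclic_sub_def by auto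
  obtain D where D: "direct_summand M D" "beta_star M (cyc M x) D"
    using assms(2) K unfolding principally_goldie_star_lifting_def by blast
  have Dsub: "submodule M D" using D(1) unfolding direct_summand_def by blast
  \<comment> \<open>D is cyclic, so its image in M/N is a direct summand by hypothesis\<close>
  have "cyclic_sub M D" using M.beta_summand_cyclic[OF K(2) D] .
  hence "direct_summand (quot M N) (qimg M N (msum M N D))" using assms(4) D(1) by blast
  hence "direct_summand (quot M N) (qimg M N D)"
    using M.qimg_absorb[OF N M.sub_carrier[OF Dsub]] by simp
  moreover have "beta_star (quot M N) X (qimg M N D)"
    using M.beta_star_quot[OF N K(1) Dsub D(2)] x(2) by simp
  ultimately show "\<exists>E. direct_summand (quot M N) E \<and> beta_star (quot M N) X E" by blast
qed

end
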